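(* Let $d\ge2$, $0<4\gamma<\epsilon<\tfrac12$, $L>0$ and $\delta=1/L$. Let $\sigma\in\{-1,1\}^d$ and let $\mathbf{p}\in\mathrm{Gol}^{\triangle}_d(L)$ satisfy $\mathbf{v}_\sigma(\delta)^T\mathbf{p}=1$ and $\mathbf{v}_\tau(\delta)^T\mathbf{p}<1$ for all $\tau\ne\sigma$. Then $\mathbf{p}$ can be written as a convex combination of exactly $d$ vertices, namely $\mathbf{p}=\sum_{k=1}^d\alpha_{(k,\sigma_k)}\mathbf{w}_{(k,\sigma_k)}(L)$ with $\sum_{k=1}^d\alpha_{(k,\sigma_k)}=1$ and $\alpha_{(k,\sigma_k)}>0$ for all $k$; moreover, this convex combination is the unique convex combination of the $2d$ points $\mathbf{w}_{(k,s)}(L)$, $k\in\{1,\dots,d\}$, $s\in\{-1,1\}$, that equals $\mathbf{p}$.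
   Context: Goldfarb cube: $\mathrm{Gol}_d=\{\mathbf{x}\in\mathbb{R}^d:-z_k\le x_k\le z_k,\ 1\le k\le d\}$ with $z_1=1$, $z_2=1-\epsilon-\epsilon x_1$, $z_k=1-\epsilon+\epsilon\gamma-\epsilon(x_{k-1}-\gamma x_{k-2})$ ($k\ge3$); it is a full-dimensional polytope with origin in its interior, with $2d$ facets (one per inequality) and $2^d$ distinct vertices $\mathbf{v}_\sigma$, $\sigma\in\{-1,1\}^d$, where $\mathbf{v}_\sigma$ is the point at which, for each $k$, $x_k\le z_k$ (if $\sigma_k=1$) resp. $-z_k\le x_k$ (if $\sigma_k=-1$) is tight; $\mathbf{v}_\sigma$ lies on exactly these $d$ facets. For $(k,s)\in\{1,\dots,d\}\times\{-1,1\}$, $\mathbf{w}_{(k,s)}$ is the unique vector such that the inequality $x_k\le z_k$ (for $s=1$) or $-z_k\le x_k$ (for $s=-1$) is equivalent to $\mathbf{w}_{(k,s)}^T\mathbf{x}\le1$; explicitly $\mathbf{w}_{(1,s)}=s\mathbf{e}_1$, $\mathbf{w}_{(2,s)}=(\epsilon\mathbf{e}_1+s\mathbf{e}_2)/(1-\epsilon)$, $\mathbf{w}_{(k,s)}=(-\epsilon\gamma\mathbf{e}_{k-2}+\epsilon\mathbf{e}_{k-1}+s\mathbf{e}_k)/(1-\epsilon+\epsilon\gamma)$ for $k\ge3$. The dual Goldfarb cube $\mathrm{Gol}^{\triangle}_d:=\{\mathbf{x}:\mathbf{v}_\tau^T\mathbf{x}\le1\ \forall\tau\}$ is the convex hull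 of the $2d$ points $\mathbf{w}_{(k,s)}$, which are its vertices. Stretching: $\mathbf{x}(t):=(tx_1,\dots,tx_{d-2},x_{d-1},x_d)^T$; $\mathrm{Gol}^{\triangle}_d(L):=\{\mathbf{x}(L):\mathbf{x}\in\mathrm{Gol}^{\triangle}_d\}=\mathrm{conv}\{\mathbf{w}_{(k,s)}(L)\}=\{\mathbf{x}:\mathbf{v}_\tau(1/L)^T\mathbf{x}\le1\ \forall\tau\}$. *)

theory Defs
  imports Main "HOL-Analysis.Analysis"
begin

text \<open>Vectors of R^d are represented as functions nat => real whose relevant
components are those with index in {1..d} (components outside are 0 for the
points w below).\<close>

definition inner_d :: "nat \<Rightarrow> (nat \<Rightarrow> real) \<Rightarrow> (nat \<Rightarrow> real) \<Rightarrow> real" where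
  "inner_d d x y = (\<Sum>i=1..d. x i * y i)"

definition unit_e :: "nat \<Rightarrow> nat \<Rightarrow> real" where
  "unit_e k = (\<lambda>i. if i = k then 1 else 0)"

definition sign_vecs :: "nat \<Rightarrow> (nat \<Rightarrow> int) set" where
  "sign_vecs d = {\<sigma>. \<forall>k\<in>{1..d}. \<sigma> k \<in> {-1, 1}}"

definition gol_z :: "real \<Rightarrow> real \<Rightarrow> nat \<Rightarrow> (nat \<Rightarrow> real) \<Rightarrow> real" where
  "gol_z \<epsilon> \<gamma> k x =
     (if k = 1 then 1
      else if k = 2 then 1 - \<epsilon> - \<epsilon> * x 1
      else 1 - \<epsilon> + \<epsilon> * \<gamma> - \<epsilon> * (x (k - 1) - \<gamma> * x (k - 2)))"

text \<open>The vertex v_sigma: the point where x_k = sigma_k z_k(x) for each k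
(the triangular system solved by forward substitution).\<close>
fun gol_vertex :: "real \<Rightarrow> real \<Rightarrow> (nat \<Rightarrow> int) \<Rightarrow> nat \<Rightarrow> real" where
  "gol_vertex \<epsilon> \<gamma> \<sigma> 0 = 0"
| "gol_vertex \<epsilon> \<gamma> \<sigma> (Suc 0) = of_int (\<sigma> 1)"
| "gol_vertex \<epsilon> \<gamma> \<sigma> (Suc (Suc 0)) =
     of_int (\<sigma> 2) * (1 - \<epsilon> - \<epsilon> * gol_vertex \<epsilon> \<gamma> \<sigma> 1)"
| "gol_vertex \<epsilon> \<gamma> \<sigma> (Suc (Suc (Suc k))) =
     of_int (\<sigma> (k + 3)) * (1 - \<epsilon> + \<epsilon> * \<gamma>
        - \<epsilon> * (gol_vertex \<epsilon> \<gamma> \<sigma> (k + 2) - \<gamma> * gol_vertex \<epsilon> \<gamma> \<sigma> (k + 1)))"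

definition gol_w :: "real \<Rightarrow> real \<Rightarrow> nat \<Rightarrow> int \<Rightarrow> nat \<Rightarrow> real" where
  "gol_w \<epsilon> \<gamma> k s =
     (if k = 1 then (\<lambda>i. of_int s * unit_e 1 i)
      else if k = 2 then (\<lambda>i. (\<epsilon> * unit_e 1 i + of_int s * unit_e 2 i) / (1 - \<epsilon>))
      else (\<lambda>i. (- \<epsilon> * \<gamma> * unit_e (k - 2) i + \<epsilon> * unit_e (k - 1) i + of_int s * unit_e k i)
               / (1 - \<epsilon> + \<epsilon> * \<gamma>)))"

definition stretch :: "nat \<Rightarrow> real \<Rightarrow> (nat \<Rightarrow> real) \<Rightarrow> nat \<Rightarrow> real" where
  "stretch d t x = (\<lambda>i. if 1 \<le> i \<and> i \<le> d - 2 then t * x i else x i)"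

definition w_index :: "nat \<Rightarrow> (nat \<times> int) set" where
  "w_index d = {1..d} \<times> {-1, 1}"

definition w_comb :: "nat \<Rightarrow> real \<Rightarrow> real \<Rightarrow> real \<Rightarrow> (nat \<times> int \<Rightarrow> real) \<Rightarrow> nat \<Rightarrow> real" where
  "w_comb d \<epsilon> \<gamma> L a = (\<lambda>i. \<Sum>(k, s)\<in>w_index d. a (k, s) * stretch d L (gol_w \<epsilon> \<gamma> k s) i)"

definition gol_dual_L :: "nat \<Rightarrow> real \<Rightarrow> real \<Rightarrow> real \<Rightarrow> (nat \<Rightarrow> real) set" where
  "gol_dual_L d \<epsilon> \<gamma> L =
     {p. \<exists>a. (\<forall>ks\<in>w_index d. a ks \<ge> 0) \<and> (\<Sum>ks\<in>w_index d. a ks) = 1 \<and> p = w_comb d \<epsilon> \<gamma> L a}"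

end

theory Submission
  imports Defs
begin

text \<open>Since v_\<sigma>,k = \<sigma>_k z_k(v_\<sigma>) with z_k(v_\<sigma>) > 0, the vertex v_\<sigma> lies on the facets
  (k, \<sigma>_k) and strictly inside the opposite ones, i.e. v_\<sigma>^T w_(k,\<sigma>_k) = 1 and
  v_\<sigma>^T w_(k,-\<sigma>_k) < 1; stretching by \<delta> and by L = 1/\<delta> cancels in these inner products.
  So in any convex combination of the w_(k,s)(L) equal to p the weights of the w_(k,-\<sigma>_k)(L)
  vanish. The remaining d vectors w_(k,\<sigma>_k)(L) form a triangular, hence independent, system,
  which gives uniqueness. If the weight of w_(j,\<sigma>_j)(L) were 0, the vertex obtained by
  flipping \<sigma>_j would still lie on all the other facets (k, \<sigma>_k), giving it inner product 1
  with p, against the hypothesis.\<close>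

definition gol_w_denom :: "real \<Rightarrow> real \<Rightarrow> nat \<Rightarrow> real" where
  "gol_w_denom \<epsilon> \<gamma> k = (if k = 1 then 1 else if k = 2 then 1 - \<epsilon> else 1 - \<epsilon> + \<epsilon> * \<gamma>)"

definition sign_comb :: "nat \<Rightarrow> real \<Rightarrow> real \<Rightarrow> real \<Rightarrow> (nat \<Rightarrow> int) \<Rightarrow> (nat \<Rightarrow> real) \<Rightarrow> nat \<Rightarrow> real"
  where "sign_comb d \<epsilon> \<gamma> L \<sigma> \<alpha> = (\<lambda>i. \<Sum>k=1..d. \<alpha> k * stretch d L (gol_w \<epsilon> \<gamma> k (\<sigma> k)) i)"

lemma sign_vecsD: "\<sigma> \<in> sign_vecs d \<Longrightarrow> k \<in> {1..d} \<Longrightarrow> \<sigma> k = -1 \<or> \<sigma> k = 1"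
  by (auto simp: sign_vecs_def)

lemma flip_in_sign_vecs: "\<sigma> \<in> sign_vecs d \<Longrightarrow> \<sigma>(j := - \<sigma> j) \<in> sign_vecs d"
  by (auto simp: sign_vecs_def)

lemma gol_vertex_eq_sign_mult_gol_z:
  assumes "1 \<le> k"
  shows "gol_vertex \<epsilon> \<gamma> \<sigma> k = of_int (\<sigma> k) * gol_z \<epsilon> \<gamma> k (gol_vertex \<epsilon> \<gamma> \<sigma>)"
proof -
  consider "k = 1" | "k = 2" | m where "k = Suc (Suc (Suc m))"
    using assms by (metis One_nat_def Suc_1 not0_implies_Suc not_one_le_zero)
  then show ?thesis
    by cases (simp_all add: gol_z_def numeral_2_eq_2 numeral_3_eq_3 add.commute)
qed

lemma inner_d_unit_e: "inner_d d x (unit_e j) = (if j \<in> {1..d} then x j else 0)"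
  by (simp add: inner_d_def unit_e_def if_distrib cong: if_cong)

lemma inner_d_lincomb3:
  "inner_d d x (\<lambda>i. (a * u i + b * v i + c * w i) / q)
     = (a * inner_d d x u + b * inner_d d x v + c * inner_d d x w) / q"
proof -
  have "inner_d d x (\<lambda>i. (a * u i + b * v i + c * w i) / q)
      = (\<Sum>i=1..d. a * (x i * u i) + b * (x i * v i) + c * (x i * w i)) / q"
    unfolding inner_d_def sum_divide_distrib by (intro sum.cong) (simp_all add: algebra_simps)
  then show ?thesis by (simp add: inner_d_def sum.distrib sum_distrib_left)
qed

lemma inner_d_stretch_reciprocal:
  assumes "\<delta> * L = 1"
  shows "inner_d d (stretch d \<delta> v) (\<lambda>i. \<Sum>j\<in>J. c j * stretch d L (W j) i)
       = (\<Sum>j\<in>J. c j * inner_d d v (W j))"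
proof -
  have cancel: "stretch d \<delta> v i * stretch d L w i = v i * w i" for w i
    using assms unfolding stretch_def by (auto simp: algebra_simps)
  have "inner_d d (stretch d \<delta> v) (\<lambda>i. \<Sum>j\<in>J. c j * stretch d L (W j) i)
      = (\<Sum>i=1..d. \<Sum>j\<in>J. c j * (v i * W j i))"
    unfolding inner_d_def sum_distrib_left by (intro sum.cong refl) (metis cancel mult.left_commute)
  also have "\<dots> = (\<Sum>j\<in>J. c j * inner_d d v (W j))"
    unfolding inner_d_def by (subst sum.swap) (simp add: sum_distrib_left)
  finally show ?thesis .
qed

lemma inner_d_stretch_w_comb:
  "\<delta> * L = 1 \<Longrightarrow> inner_d d (stretch d \<delta> v) (w_comb d \<epsilon> \<gamma> L a)
     = (\<Sum>ks\<in>w_index d. a ks * inner_d d v (case_prod (gol_w \<epsilon> \<gamma>) ks))"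
  using inner_d_stretch_reciprocal[where J = "w_index d" and W = "case_prod (gol_w \<epsilon> \<gamma>)"]
  by (simp add: w_comb_def split_def)

lemma inner_d_stretch_sign_comb:
  "\<delta> * L = 1 \<Longrightarrow> inner_d d (stretch d \<delta> v) (sign_comb d \<epsilon> \<gamma> L \<sigma> \<alpha>)
     = (\<Sum>k=1..d. \<alpha> k * inner_d d v (gol_w \<epsilon> \<gamma> k (\<sigma> k)))"
  unfolding sign_comb_def by (rule inner_d_stretch_reciprocal)

lemma w_index_iff: "(k, s) \<in> w_index d \<longleftrightarrow> k \<in> {1..d} \<and> (s = -1 \<or> s = 1)"
  by (auto simp: w_index_def)

lemma sign_pairs_in_w_index:
  "\<sigma> \<in> sign_vecs d \<Longrightarrow> k \<in> {1..d} \<Longrightarrow> (k, \<sigma> k) \<in> w_index d \<and> (k, - \<sigma> k) \<in> w_index d"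
  by (auto simp: w_index_iff dest: sign_vecsD)

lemma finite_w_index: "finite (w_index d)"
  by (simp add: w_index_def)

lemma sum_w_index_sign:
  assumes "\<sigma> \<in> sign_vecs d" "\<forall>k\<in>{1..d}. f (k, - \<sigma> k) = 0"
  shows "(\<Sum>ks\<in>w_index d. f ks) = (\<Sum>k=1..d. f (k, \<sigma> k))"
proof -
  have "(\<Sum>ks\<in>w_index d. f ks) = (\<Sum>k=1..d. f (k, -1) + f (k, 1))"
    unfolding w_index_def by (simp add: sum.cartesian_product')
  also have "\<dots> = (\<Sum>k=1..d. f (k, \<sigma> k))"
  proof (intro sum.cong refl)
    fix k assume "k \<in> {1..d}"
    then show "f (k, -1) + f (k, 1) = f (k, \<sigma> k)"
      using assms(2) sign_vecsD[OF assms(1)] by (metis add.right_neutral add_0 equation_minus_iff)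
  qed
  finally show ?thesis .
qed

lemma w_comb_eq_sign_comb:
  assumes "\<sigma> \<in> sign_vecs d" "\<forall>k\<in>{1..d}. a (k, - \<sigma> k) = 0"
  shows "w_comb d \<epsilon> \<gamma> L a = sign_comb d \<epsilon> \<gamma> L \<sigma> (\<lambda>k. a (k, \<sigma> k))"
    and "(\<Sum>ks\<in>w_index d. a ks) = (\<Sum>k=1..d. a (k, \<sigma> k))"
proof -
  have "w_comb d \<epsilon> \<gamma> L a i = sign_comb d \<epsilon> \<gamma> L \<sigma> (\<lambda>k. a (k, \<sigma> k)) i" for i
    using sum_w_index_sign[OF assms(1), where f = "\<lambda>(k, s). a (k, s) * stretch d L (gol_w \<epsilon> \<gamma> k s) i"]
      assms(2) by (simp add: w_comb_def sign_comb_def)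
  then show "w_comb d \<epsilon> \<gamma> L a = sign_comb d \<epsilon> \<gamma> L \<sigma> (\<lambda>k. a (k, \<sigma> k))" ..
  show "(\<Sum>ks\<in>w_index d. a ks) = (\<Sum>k=1..d. a (k, \<sigma> k))"
    using sum_w_index_sign[OF assms] .
qed

lemma gol_w_eq_0_beyond: "k < j \<Longrightarrow> gol_w \<epsilon> \<gamma> k s j = 0"
  by (auto simp: gol_w_def unit_e_def)

locale goldfarb_params =
  fixes \<epsilon> \<gamma> :: real
  assumes gamma_pos: "0 < 4 * \<gamma>" and gamma_less_eps: "4 * \<gamma> < \<epsilon>" and eps_less_half: "\<epsilon> < 1 / 2"
begin

lemma gol_w_denom_pos: "0 < gol_w_denom \<epsilon> \<gamma> k"
proof -
  have "0 < \<epsilon> * \<gamma>" using gamma_pos gamma_less_eps by simp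
  then show ?thesis using eps_less_half by (simp add: gol_w_denom_def)
qed

text \<open>The normalisation of w_(k,s) is chosen exactly so that w_(k,s)^T x \<le> 1 is the
  facet inequality s x_k \<le> z_k(x).\<close>
lemma inner_d_gol_w:
  assumes "1 \<le> k" "k \<le> d"
  shows "inner_d d x (gol_w \<epsilon> \<gamma> k s) = 1 - (gol_z \<epsilon> \<gamma> k x - of_int s * x k) / gol_w_denom \<epsilon> \<gamma> k"
proof -
  have c: "gol_w_denom \<epsilon> \<gamma> k \<noteq> 0" using gol_w_denom_pos by (metis less_irrefl)
  consider "k = 1" | "k = 2" | "k \<ge> 3" using assms(1) by linarith
  then show ?thesis
  proof cases
    case 1
    then have "gol_w \<epsilon> \<gamma> k s = (\<lambda>i. (0 * x i + 0 * x i + of_int s * unit_e 1 i) / 1)"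
      by (simp add: gol_w_def)
    then show ?thesis
      using 1 assms c by (simp only: inner_d_lincomb3 inner_d_unit_e) (simp add: gol_z_def gol_w_denom_def)
  next
    case 2
    then have "gol_w \<epsilon> \<gamma> k s = (\<lambda>i. (0 * x i + \<epsilon> * unit_e 1 i + of_int s * unit_e 2 i) / (1 - \<epsilon>))"
      by (simp add: gol_w_def)
    then show ?thesis
      using 2 assms c
      by (simp only: inner_d_lincomb3 inner_d_unit_e) (simp add: gol_z_def gol_w_denom_def field_simps)
  next
    case 3
    then have "gol_w \<epsilon> \<gamma> k s = (\<lambda>i. (- \<epsilon> * \<gamma> * unit_e (k - 2) i + \<epsilon> * unit_e (k - 1) i
        + of_int s * unit_e k i) / (1 - \<epsilon> + \<epsilon> * \<gamma>))"
      by (simp add: gol_w_def)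
    moreover have "k - 1 \<in> {1..d}" "k - 2 \<in> {1..d}" using 3 assms by auto
    ultimately show ?thesis
      using 3 assms c
      by (simp only: inner_d_lincomb3 inner_d_unit_e) (simp add: gol_z_def gol_w_denom_def field_simps)
  qed
qed

text \<open>The invariant 1 + b \<ge> \<epsilon>/2 (1 + a) on consecutive vertex coordinates a, b is what
  keeps z_k \<le> 1.\<close>
lemma gol_z_recurrence_bounds:
  fixes a b z :: real
  assumes a: "\<bar>a\<bar> \<le> 1" and b: "\<bar>b\<bar> \<le> 1" and inv: "\<epsilon> / 2 * (1 + a) \<le> 1 + b"
    and z: "z = 1 - \<epsilon> + \<epsilon> * \<gamma> - \<epsilon> * (b - \<gamma> * a)"
  shows "0 < z" "z \<le> 1" "\<epsilon> / 2 * (1 + b) \<le> 1 - z" "\<epsilon> / 2 * (1 + b) \<le> 1 + z"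
proof -
  have eg: "0 < \<epsilon> * \<gamma>" "0 < \<epsilon>" using gamma_pos gamma_less_eps by auto
  have "\<epsilon> * b \<le> \<epsilon>" using b eg by (simp add: mult_left_le)
  moreover have "- (\<epsilon> * \<gamma>) \<le> \<epsilon> * \<gamma> * a"
    using mult_left_mono[of "-1" a "\<epsilon> * \<gamma>"] a eg by simp
  ultimately show z_pos: "0 < z" using z eps_less_half by (simp add: algebra_simps)
  have ab: "0 \<le> 1 + a" "0 \<le> 1 + b" using a b by auto
  have "\<epsilon> * \<gamma> * (1 + a) = 2 * \<gamma> * (\<epsilon> / 2 * (1 + a))" by simp
  also have "\<dots> \<le> 2 * \<gamma> * (1 + b)" using inv gamma_pos by (intro mult_left_mono) auto
  also have "\<dots> \<le> \<epsilon> / 2 * (1 + b)" using ab gamma_less_eps by (intro mult_right_mono) auto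
  finally have "\<epsilon> * \<gamma> * (1 + a) \<le> \<epsilon> / 2 * (1 + b)" .
  moreover have "1 - z = 2 * (\<epsilon> / 2 * (1 + b)) - \<epsilon> * \<gamma> * (1 + a)" using z by (simp add: algebra_simps)
  ultimately show lower: "\<epsilon> / 2 * (1 + b) \<le> 1 - z" by linarith
  have "0 \<le> \<epsilon> / 2 * (1 + b)" using ab eg by simp
  then show "z \<le> 1" using lower by linarith
  have "\<epsilon> / 2 * (1 + b) \<le> 1 / 4 * 2" using ab b eps_less_half eg by (intro mult_mono) auto
  then show "\<epsilon> / 2 * (1 + b) \<le> 1 + z" using z_pos by linarith
qed

lemma gol_vertex_invariant:
  assumes \<sigma>: "\<sigma> \<in> sign_vecs d" and k: "1 \<le> k"
  shows "k + 1 \<le> d \<Longrightarrow> \<bar>gol_vertex \<epsilon> \<gamma> \<sigma> k\<bar> \<le> 1 \<and> \<bar>gol_vertex \<epsilon> \<gamma> \<sigma> (k + 1)\<bar> \<le> 1 \<and>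
           \<epsilon> / 2 * (1 + gol_vertex \<epsilon> \<gamma> \<sigma> k) \<le> 1 + gol_vertex \<epsilon> \<gamma> \<sigma> (k + 1)"
  using k
proof (induction k rule: nat_induct_at_least)
  case base
  have "\<sigma> 1 = -1 \<or> \<sigma> 1 = 1" "\<sigma> 2 = -1 \<or> \<sigma> 2 = 1"
    using sign_vecsD[OF \<sigma>] base by auto
  then show ?case using eps_less_half gamma_pos gamma_less_eps by (auto simp: numeral_2_eq_2)
next
  case (Suc k)
  define v where "v = gol_vertex \<epsilon> \<gamma> \<sigma>"
  define z where "z = 1 - \<epsilon> + \<epsilon> * \<gamma> - \<epsilon> * (v (k + 1) - \<gamma> * v k)"
  have IH: "\<bar>v k\<bar> \<le> 1" "\<bar>v (k + 1)\<bar> \<le> 1" "\<epsilon> / 2 * (1 + v k) \<le> 1 + v (k + 1)"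
    using Suc unfolding v_def by auto
  have "v (k + 2) = of_int (\<sigma> (k + 2)) * z"
    using gol_vertex_eq_sign_mult_gol_z[of "k + 2"] Suc.hyps
    unfolding v_def z_def by (simp add: gol_z_def)
  moreover have "\<sigma> (k + 2) = -1 \<or> \<sigma> (k + 2) = 1" using sign_vecsD[OF \<sigma>] Suc by auto
  ultimately show ?case
    using gol_z_recurrence_bounds[OF IH z_def] IH unfolding v_def by auto
qed

lemma gol_z_gol_vertex_pos:
  assumes \<sigma>: "\<sigma> \<in> sign_vecs d" and k: "1 \<le> k" "k \<le> d"
  shows "0 < gol_z \<epsilon> \<gamma> k (gol_vertex \<epsilon> \<gamma> \<sigma>)"
proof -
  consider "k = 1" | "k = 2" | "k \<ge> 3" using k by linarith
  then show ?thesis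
  proof cases
    case 1
    then show ?thesis by (simp add: gol_z_def)
  next
    case 2
    then have "\<sigma> 1 = -1 \<or> \<sigma> 1 = 1" using sign_vecsD[OF \<sigma>] k by auto
    then show ?thesis using 2 eps_less_half by (auto simp: gol_z_def)
  next
    case 3
    then have "k - 2 + 1 = k - 1" "k - 2 + 2 = k" by auto
    then show ?thesis
      using gol_vertex_invariant[OF \<sigma>, of "k - 2"] 3 k
        gol_z_recurrence_bounds(1)[of "gol_vertex \<epsilon> \<gamma> \<sigma> (k - 2)" "gol_vertex \<epsilon> \<gamma> \<sigma> (k - 1)"]
      by (simp add: gol_z_def)
  qed
qed

lemma inner_gol_vertex_gol_w:
  assumes "k \<in> {1..d}"
  shows "inner_d d (gol_vertex \<epsilon> \<gamma> \<tau>) (gol_w \<epsilon> \<gamma> k s)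
           = 1 - (1 - of_int s * of_int (\<tau> k)) * gol_z \<epsilon> \<gamma> k (gol_vertex \<epsilon> \<gamma> \<tau>) / gol_w_denom \<epsilon> \<gamma> k"
proof -
  have "gol_vertex \<epsilon> \<gamma> \<tau> k = of_int (\<tau> k) * gol_z \<epsilon> \<gamma> k (gol_vertex \<epsilon> \<gamma> \<tau>)"
    using gol_vertex_eq_sign_mult_gol_z assms by simp
  then show ?thesis using assms by (simp add: inner_d_gol_w algebra_simps)
qed

lemma inner_gol_vertex_gol_w_same_sign:
  assumes "\<tau> \<in> sign_vecs d" "k \<in> {1..d}"
  shows "inner_d d (gol_vertex \<epsilon> \<gamma> \<tau>) (gol_w \<epsilon> \<gamma> k (\<tau> k)) = 1"
proof -
  have "of_int (\<tau> k) * of_int (\<tau> k) = (1::real)" using sign_vecsD[OF assms] by auto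
  then show ?thesis using inner_gol_vertex_gol_w[OF assms(2)] by simp
qed

lemma inner_gol_vertex_gol_w_opposite_sign:
  assumes "\<tau> \<in> sign_vecs d" "k \<in> {1..d}"
  shows "inner_d d (gol_vertex \<epsilon> \<gamma> \<tau>) (gol_w \<epsilon> \<gamma> k (- \<tau> k)) < 1"
proof -
  have "of_int (- \<tau> k) * of_int (\<tau> k) = (-1::real)" using sign_vecsD[OF assms] by auto
  moreover have "0 < gol_z \<epsilon> \<gamma> k (gol_vertex \<epsilon> \<gamma> \<tau>)" using gol_z_gol_vertex_pos assms by auto
  ultimately show ?thesis using inner_gol_vertex_gol_w[OF assms(2)] gol_w_denom_pos[of k] by simp
qed

lemma inner_gol_vertex_gol_w_le_1:
  assumes \<tau>: "\<tau> \<in> sign_vecs d" and ks: "(k, s) \<in> w_index d"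
  shows "inner_d d (gol_vertex \<epsilon> \<gamma> \<tau>) (gol_w \<epsilon> \<gamma> k s) \<le> 1"
proof -
  have k: "k \<in> {1..d}" and "s = -1 \<or> s = 1" using ks by (auto simp: w_index_iff)
  then consider "s = \<tau> k" | "s = - \<tau> k" using sign_vecsD[OF \<tau> k] by linarith
  then show ?thesis
  proof cases
    case 1
    then show ?thesis using inner_gol_vertex_gol_w_same_sign[OF \<tau> k] by simp
  next
    case 2
    then show ?thesis using inner_gol_vertex_gol_w_opposite_sign[OF \<tau> k] by simp
  qed
qed

text \<open>Each term a_(k,s) (1 - v_\<sigma>^T w_(k,s)) is nonnegative and they sum to 0; the term
  for s = -\<sigma>_k has a positive second factor.\<close>
lemma convex_comb_vanishes_off_sign:
  assumes \<sigma>: "\<sigma> \<in> sign_vecs d" and \<delta>L: "\<delta> * L = 1"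
    and nonneg: "\<forall>ks\<in>w_index d. 0 \<le> a ks" and sum: "(\<Sum>ks\<in>w_index d. a ks) = 1"
    and facet: "inner_d d (stretch d \<delta> (gol_vertex \<epsilon> \<gamma> \<sigma>)) (w_comb d \<epsilon> \<gamma> L a) = 1"
    and k: "k \<in> {1..d}"
  shows "a (k, - \<sigma> k) = 0"
proof -
  define F where "F ks = inner_d d (gol_vertex \<epsilon> \<gamma> \<sigma>) (case_prod (gol_w \<epsilon> \<gamma>) ks)" for ks
  have terms_nonneg: "0 \<le> a ks * (1 - F ks)" if "ks \<in> w_index d" for ks
  proof -
    have "F ks \<le> 1" using that inner_gol_vertex_gol_w_le_1[OF \<sigma>] unfolding F_def by (cases ks) simp
    then show ?thesis using nonneg that by simp
  qed
  have "(\<Sum>ks\<in>w_index d. a ks * (1 - F ks)) = (\<Sum>ks\<in>w_index d. a ks) - (\<Sum>ks\<in>w_index d. a ks * F ks)"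
    by (simp add: right_diff_distrib sum_subtractf)
  also have "(\<Sum>ks\<in>w_index d. a ks * F ks) = 1"
    using facet unfolding inner_d_stretch_w_comb[OF \<delta>L] F_def .
  finally have "(\<Sum>ks\<in>w_index d. a ks * (1 - F ks)) = 0" using sum by simp
  then have "\<forall>ks\<in>w_index d. a ks * (1 - F ks) = 0"
    by (subst (asm) sum_nonneg_eq_0_iff) (use finite_w_index terms_nonneg in auto)
  moreover have "(k, - \<sigma> k) \<in> w_index d" using sign_pairs_in_w_index[OF \<sigma> k] ..
  ultimately have "a (k, - \<sigma> k) * (1 - F (k, - \<sigma> k)) = 0" by blast
  moreover have "F (k, - \<sigma> k) < 1"
    using inner_gol_vertex_gol_w_opposite_sign[OF \<sigma> k] unfolding F_def by simp
  ultimately show ?thesis by simp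
qed

lemma convex_comb_on_facet_eq_sign_comb:
  assumes \<sigma>: "\<sigma> \<in> sign_vecs d" and \<delta>L: "\<delta> * L = 1"
    and nonneg: "\<forall>ks\<in>w_index d. 0 \<le> a ks" and sum: "(\<Sum>ks\<in>w_index d. a ks) = 1"
    and facet: "inner_d d (stretch d \<delta> (gol_vertex \<epsilon> \<gamma> \<sigma>)) (w_comb d \<epsilon> \<gamma> L a) = 1"
  shows "w_comb d \<epsilon> \<gamma> L a = sign_comb d \<epsilon> \<gamma> L \<sigma> (\<lambda>k. a (k, \<sigma> k))"
    and "(\<Sum>k=1..d. a (k, \<sigma> k)) = 1"
proof -
  have "\<forall>k\<in>{1..d}. a (k, - \<sigma> k) = 0"
    using convex_comb_vanishes_off_sign[OF assms] by blast
  from w_comb_eq_sign_comb[OF \<sigma> this] sum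
  show "w_comb d \<epsilon> \<gamma> L a = sign_comb d \<epsilon> \<gamma> L \<sigma> (\<lambda>k. a (k, \<sigma> k))" "(\<Sum>k=1..d. a (k, \<sigma> k)) = 1"
    by simp_all
qed

lemma inner_flipped_vertex_sign_comb:
  assumes \<sigma>: "\<sigma> \<in> sign_vecs d" and \<delta>L: "\<delta> * L = 1" and "\<alpha> j = 0"
  shows "inner_d d (stretch d \<delta> (gol_vertex \<epsilon> \<gamma> (\<sigma>(j := - \<sigma> j)))) (sign_comb d \<epsilon> \<gamma> L \<sigma> \<alpha>)
           = (\<Sum>k=1..d. \<alpha> k)"
  unfolding inner_d_stretch_sign_comb[OF \<delta>L]
proof (rule sum.cong)
  fix k assume k: "k \<in> {1..d}"
  show "\<alpha> k * inner_d d (gol_vertex \<epsilon> \<gamma> (\<sigma>(j := - \<sigma> j))) (gol_w \<epsilon> \<gamma> k (\<sigma> k)) = \<alpha> k"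
  proof (cases "k = j")
    case False
    then have "(\<sigma>(j := - \<sigma> j)) k = \<sigma> k" by simp
    then show ?thesis
      using inner_gol_vertex_gol_w_same_sign[OF flip_in_sign_vecs[OF \<sigma>, of j] k] by simp
  qed (use assms in simp)
qed simp

lemma sign_comb_coeff_pos:
  assumes \<sigma>: "\<sigma> \<in> sign_vecs d" and \<delta>L: "\<delta> * L = 1"
    and nonneg: "0 \<le> \<alpha> j" and sum: "(\<Sum>k=1..d. \<alpha> k) = 1"
    and off_flipped: "inner_d d (stretch d \<delta> (gol_vertex \<epsilon> \<gamma> (\<sigma>(j := - \<sigma> j)))) (sign_comb d \<epsilon> \<gamma> L \<sigma> \<alpha>) < 1"
  shows "0 < \<alpha> j"
proof (rule ccontr)
  assume "\<not> 0 < \<alpha> j"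
  then have "\<alpha> j = 0" using nonneg by simp
  then show False using inner_flipped_vertex_sign_comb[OF \<sigma> \<delta>L] sum off_flipped by simp
qed

lemma gol_w_diag_nonzero: "1 \<le> k \<Longrightarrow> s \<noteq> 0 \<Longrightarrow> gol_w \<epsilon> \<gamma> k s k \<noteq> 0"
  using gol_w_denom_pos[of 2] gol_w_denom_pos[of 3]
  by (auto simp: gol_w_def unit_e_def gol_w_denom_def)

text \<open>The vectors w_(k,\<sigma>_k)(L) form a triangular system: look at the largest k with a
  nonzero coefficient.\<close>
lemma sign_comb_eq_zero_imp_zero:
  assumes \<sigma>: "\<sigma> \<in> sign_vecs d" and L: "L \<noteq> 0" and zero: "sign_comb d \<epsilon> \<gamma> L \<sigma> b = (\<lambda>_. 0)"
  shows "\<forall>k\<in>{1..d}. b k = 0"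
proof (rule ccontr)
  define S where "S = {k\<in>{1..d}. b k \<noteq> 0}"
  define j where "j = Max S"
  assume "\<not> (\<forall>k\<in>{1..d}. b k = 0)"
  then have "finite S" "S \<noteq> {}" unfolding S_def by auto
  then have "j \<in> S" and j_max: "\<And>k. k \<in> S \<Longrightarrow> k \<le> j"
    unfolding j_def by auto
  then have j: "j \<in> {1..d}" "b j \<noteq> 0" unfolding S_def by auto
  let ?c = "\<lambda>k. b k * stretch d L (gol_w \<epsilon> \<gamma> k (\<sigma> k)) j"
  have others_zero: "?c k = 0" if "k \<in> {1..d} - {j}" for k
  proof (cases "k < j")
    case True
    then show ?thesis by (simp add: stretch_def gol_w_eq_0_beyond)
  next
    case False
    then have "k \<notin> S" using j_max that by force
    then show ?thesis using that unfolding S_def by auto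
  qed
  have "(\<Sum>k\<in>{1..d} - {j}. ?c k) = 0" by (rule sum.neutral) (use others_zero in blast)
  then have "?c j = 0" using fun_cong[OF zero, of j] j(1) by (simp add: sign_comb_def sum.remove)
  moreover have "\<sigma> j \<noteq> 0" using sign_vecsD[OF \<sigma> j(1)] by auto
  then have "gol_w \<epsilon> \<gamma> j (\<sigma> j) j \<noteq> 0" using gol_w_diag_nonzero[of j "\<sigma> j"] j(1) by simp
  ultimately show False using j(2) L by (simp add: stretch_def split: if_splits)
qed

lemma sign_comb_inject:
  assumes "\<sigma> \<in> sign_vecs d" "L \<noteq> 0" "sign_comb d \<epsilon> \<gamma> L \<sigma> \<alpha> = sign_comb d \<epsilon> \<gamma> L \<sigma> \<beta>"
  shows "\<forall>k\<in>{1..d}. \<alpha> k = \<beta> k"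
proof -
  have "sign_comb d \<epsilon> \<gamma> L \<sigma> (\<lambda>k. \<alpha> k - \<beta> k) = (\<lambda>_. 0)"
    using fun_cong[OF assms(3)] by (auto simp: sign_comb_def left_diff_distrib sum_subtractf)
  from sign_comb_eq_zero_imp_zero[OF assms(1,2) this] show ?thesis by simp
qed


lemma convex_comb_on_facet_unique:
  assumes \<sigma>: "\<sigma> \<in> sign_vecs d" and \<delta>L: "\<delta> * L = 1"
    and nonneg: "\<forall>ks\<in>w_index d. 0 \<le> a ks" and sum: "(\<Sum>ks\<in>w_index d. a ks) = 1"
    and facet: "inner_d d (stretch d \<delta> (gol_vertex \<epsilon> \<gamma> \<sigma>)) (w_comb d \<epsilon> \<gamma> L a) = 1"
    and comb: "w_comb d \<epsilon> \<gamma> L a = sign_comb d \<epsilon> \<gamma> L \<sigma> \<alpha>"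
    and ks: "(k, s) \<in> w_index d"
  shows "a (k, s) = (if s = \<sigma> k then \<alpha> k else 0)"
proof -
  have k: "k \<in> {1..d}" and "s = \<sigma> k \<or> s = - \<sigma> k"
    using ks sign_vecsD[OF \<sigma>, of k] by (auto simp: w_index_iff)
  moreover have "a (k, - \<sigma> k) = 0" using convex_comb_vanishes_off_sign[OF assms(1-5) k] .
  moreover have "L \<noteq> 0" using \<delta>L by auto
  then have "a (k, \<sigma> k) = \<alpha> k"
    using sign_comb_inject[OF \<sigma>] convex_comb_on_facet_eq_sign_comb(1)[OF assms(1-5)] comb k by metis
  ultimately show ?thesis by (metis neg_equal_zero)
qed
end

theorem lemma5:
  fixes d :: nat and \<epsilon> \<gamma> L \<delta> :: real and \<sigma> :: "nat \<Rightarrow> int" and p :: "nat \<Rightarrow> real"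
  assumes "d \<ge> 2"
    and "0 < 4 * \<gamma>" and "4 * \<gamma> < \<epsilon>" and "\<epsilon> < 1 / 2"
    and "L > 0" and "\<delta> = 1 / L"
    and "\<sigma> \<in> sign_vecs d"
    and "p \<in> gol_dual_L d \<epsilon> \<gamma> L"
    and "inner_d d (stretch d \<delta> (gol_vertex \<epsilon> \<gamma> \<sigma>)) p = 1"
    and "\<forall>\<tau>\<in>sign_vecs d. (\<exists>k\<in>{1..d}. \<tau> k \<noteq> \<sigma> k) \<longrightarrow>
           inner_d d (stretch d \<delta> (gol_vertex \<epsilon> \<gamma> \<tau>)) p < 1"
  shows "\<exists>\<alpha> :: nat \<Rightarrow> real.
           (\<forall>k\<in>{1..d}. \<alpha> k > 0) \<and> (\<Sum>k=1..d. \<alpha> k) = 1 \<and>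
           p = (\<lambda>i. \<Sum>k=1..d. \<alpha> k * stretch d L (gol_w \<epsilon> \<gamma> k (\<sigma> k)) i) \<and>
           (\<forall>a :: nat \<times> int \<Rightarrow> real.
              (\<forall>ks\<in>w_index d. a ks \<ge> 0) \<and> (\<Sum>ks\<in>w_index d. a ks) = 1 \<and>
              p = w_comb d \<epsilon> \<gamma> L a
              \<longrightarrow> (\<forall>(k, s)\<in>w_index d. a (k, s) = (if s = \<sigma> k then \<alpha> k else 0)))"
proof -
  interpret goldfarb_params \<epsilon> \<gamma> using assms(2-4) by unfold_locales
  have \<delta>L: "\<delta> * L = 1" using assms(5,6) by simp
  obtain a where a: "\<forall>ks\<in>w_index d. 0 \<le> a ks" "(\<Sum>ks\<in>w_index d. a ks) = 1" "p = w_comb d \<epsilon> \<gamma> L a"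
    using assms(8) unfolding gol_dual_L_def by blast
  define \<alpha> where "\<alpha> k = a (k, \<sigma> k)" for k
  have p: "p = sign_comb d \<epsilon> \<gamma> L \<sigma> \<alpha>" and sum: "(\<Sum>k=1..d. \<alpha> k) = 1"
    using convex_comb_on_facet_eq_sign_comb[OF assms(7) \<delta>L a(1,2)] a(3) assms(9)
    unfolding \<alpha>_def by simp_all
  have pos: "0 < \<alpha> j" if j: "j \<in> {1..d}" for j
  proof (rule sign_comb_coeff_pos[OF assms(7) \<delta>L _ sum, folded p])
    show "0 \<le> \<alpha> j" using a(1) sign_pairs_in_w_index[OF assms(7) j] unfolding \<alpha>_def by blast
    have "(\<sigma>(j := - \<sigma> j)) j \<noteq> \<sigma> j" using sign_vecsD[OF assms(7) j] by auto
    then show "inner_d d (stretch d \<delta> (gol_vertex \<epsilon> \<gamma> (\<sigma>(j := - \<sigma> j)))) p < 1"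
      using assms(10) flip_in_sign_vecs[OF assms(7)] j by blast
  qed
  have unique: "b (k, s) = (if s = \<sigma> k then \<alpha> k else 0)"
    if "\<forall>ks\<in>w_index d. 0 \<le> b ks" "(\<Sum>ks\<in>w_index d. b ks) = 1" "p = w_comb d \<epsilon> \<gamma> L b"
      and "(k, s) \<in> w_index d" for b k s
    using convex_comb_on_facet_unique[OF assms(7) \<delta>L] that p assms(9) by simp
  show ?thesis
    using pos sum p unique unfolding sign_comb_def by blast
qed

end
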